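(* Consider one-sided matching with $n$ agents, $n$ items and unit-sum valuations. The best possible distortion of a deterministic ordinal matching algorithm is $\Theta(n^2)$. More precisely: (i) every ordinal algorithm whose output matches at least one agent to her top-ranked item has distortion at most $n^2$; (ii) every deterministic ordinal algorithm has distortion $\Omega(n^2)$.
   Context: One-sided matching: there is a set $N$ of $n$ agents and a set $A$ of $n$ items. Each agent $i$ has a valuation function $v_i:A\to\mathbb{R}_{\ge 0}$. Valuations are unit-sum if $\sum_{j\in A}v_i(j)=1$ for every agent $i$. A profile $\mathbf v=(v_i)_{i\in N}$ induces an ordinal profile $\succ_{\mathbf v}=(\succ_i)_{i\in N}$, where each $\succ_i$ is a strict ranking of $A$ consistent with $v_i$ (if $a\succ_i b$ then $v_i(a)\ge v_i(b)$). A matching $Y=(y_i)_{i\in N}$ is a bijection from $N$ to $A$. Its social welfare is $\mathrm{SW}(Y\mid\mathbf v)=\sum_{i\in N}v_i(y_i)$. $X(\mathbf v)$ denotes a matching of maximum social welfare. A deterministic matching algorithm making $k$ queries per agent receives $\succ_{\mathbf v}$ as input. It may adaptively make value queries, where a query $(i,j)$ returns $v_i(j)$, with at most $k$ queries per agent. It outputs a matching $\mathcal A(\succ_{\mathbf v})$. An ordinal algorithm is one with $k=0$. The distortion of an algorithm over a class of valuations is $\sup_{\mathbf v}\mathrm{SW}(X(\mathbf v)\mid\mathbf v)/\mathrm{SW}(\mathcal A(\succ_{\mathbf v})\mid\mathbf v)$, where the supremum is over all profiles in the class. *)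

theory Defs
  imports Complex_Main "HOL-Combinatorics.Permutations" "HOL-Library.Extended_Real"
begin

text \<open>Agents and items are both indexed by {..<n}. A valuation profile is
  v :: nat => nat => real, where v i j is the value of agent i for item j.
  A matching is a permutation y of {..<n} (agent i gets item y i).
  An ordinal profile is r :: nat => nat => nat, where r i k is the item that
  agent i ranks at position k (position 0 = top); r i permutes {..<n}.\<close>

definition unit_sum :: "nat \<Rightarrow> (nat \<Rightarrow> nat \<Rightarrow> real) \<Rightarrow> bool" where
  "unit_sum n v \<longleftrightarrow> (\<forall>i<n. (\<forall>j<n. v i j \<ge> 0) \<and> (\<Sum>j<n. v i j) = 1)"

definition matchings :: "nat \<Rightarrow> (nat \<Rightarrow> nat) set" where
  "matchings n = {y. y permutes {..<n}}"

definition ordinal_profile :: "nat \<Rightarrow> (nat \<Rightarrow> nat \<Rightarrow> nat) \<Rightarrow> bool" where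
  "ordinal_profile n r \<longleftrightarrow> (\<forall>i<n. r i permutes {..<n}) \<and> (\<forall>i\<ge>n. r i = id)"

definition consistent :: "nat \<Rightarrow> (nat \<Rightarrow> nat \<Rightarrow> real) \<Rightarrow> (nat \<Rightarrow> nat \<Rightarrow> nat) \<Rightarrow> bool" where
  "consistent n v r \<longleftrightarrow> ordinal_profile n r \<and>
     (\<forall>i<n. \<forall>k l. k < l \<and> l < n \<longrightarrow> v i (r i k) \<ge> v i (r i l))"

definition SW :: "nat \<Rightarrow> (nat \<Rightarrow> nat \<Rightarrow> real) \<Rightarrow> (nat \<Rightarrow> nat) \<Rightarrow> real" where
  "SW n v y = (\<Sum>i<n. v i (y i))"

definition OPT :: "nat \<Rightarrow> (nat \<Rightarrow> nat \<Rightarrow> real) \<Rightarrow> real" where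
  "OPT n v = Max (SW n v ` matchings n)"

definition ordinal_alg :: "nat \<Rightarrow> ((nat \<Rightarrow> nat \<Rightarrow> nat) \<Rightarrow> (nat \<Rightarrow> nat)) \<Rightarrow> bool" where
  "ordinal_alg n A \<longleftrightarrow> (\<forall>r. ordinal_profile n r \<longrightarrow> A r \<in> matchings n)"

definition ratio :: "real \<Rightarrow> real \<Rightarrow> ereal" where
  "ratio opt sw = (if sw = 0 then \<infinity> else ereal (opt / sw))"

text \<open>Distortion over unit-sum valuations (worst case also over tie-breaking
  of the induced ordinal profile).\<close>
definition distortion :: "nat \<Rightarrow> ((nat \<Rightarrow> nat \<Rightarrow> nat) \<Rightarrow> (nat \<Rightarrow> nat)) \<Rightarrow> ereal" where
  "distortion n A = (SUP vr \<in> {(v, r). unit_sum n v \<and> consistent n v r}.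
      ratio (OPT n (fst vr)) (SW n (fst vr) (A (snd vr))))"

end

theory Submission
  imports Defs
begin

text \<open>Upper bound: the agent who receives her top item values it at least 1/n, so the
  algorithm's welfare is at least 1/n, while no matching has welfare above n.
  Lower bound: let every agent rank item 0 first, and let agents 2i and 2i+1 share the
  second item i+1. Whatever matching the algorithm returns on this profile, choose
  values consistent with it: the holder of item 0 is indifferent between all items,
  an agent who got her second item values only item 0, and every other agent splits
  her value equally between item 0 and her second item. The algorithm then collects
  only 1/n, whereas in each pair one agent missed the shared item, and giving it to
  her yields welfare of order n/4.\<close>

lemma permutes_extend_inj_on:
  assumes "finite S" "P \<subseteq> S" "inj_on f P" "f ` P \<subseteq> S"
  shows "\<exists>p. p permutes S \<and> (\<forall>x\<in>P. p x = f x)"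
proof -
  have "card (S - P) = card (S - f ` P)"
    using assms by (simp add: card_Diff_subset card_image finite_subset)
  then obtain g where g: "bij_betw g (S - P) (S - f ` P)"
    using finite_same_card_bij assms(1) by blast
  define p where "p x = (if x \<in> P then f x else if x \<in> S then g x else x)" for x
  have "bij_betw p P (f ` P)"
    using assms(3) by (simp add: bij_betw_def inj_on_def p_def image_def)
  moreover have "bij_betw p (S - P) (S - f ` P)"
    using g by (rule bij_betw_cong[THEN iffD2, rotated]) (simp add: p_def)
  ultimately have "bij_betw p (P \<union> (S - P)) (f ` P \<union> (S - f ` P))"
    by (rule bij_betw_combine) auto
  moreover have "P \<union> (S - P) = S" "f ` P \<union> (S - f ` P) = S"
    using assms(2,4) by auto
  ultimately have "bij_betw p S S" by simp
  then have "p permutes S"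
    by (rule bij_imp_permutes) (use assms(2) in \<open>auto simp: p_def\<close>)
  then show ?thesis by (auto simp: p_def)
qed

lemma sum_if_permutes_eq:
  assumes "y permutes S" "finite S" "k \<in> S"
  shows "(\<Sum>j\<in>S. if y j = k then a else 0) = a"
proof -
  have "y j = k \<longleftrightarrow> inv y k = j" for j
    using permutes_inv_eq[OF assms(1)] by metis
  moreover have "inv y k \<in> S"
    using assms(1,3) permutes_in_image[OF permutes_inv[OF assms(1)]] by simp
  ultimately show ?thesis using assms(2) by simp
qed

lemma finite_matchings: "finite (matchings n)"
  unfolding matchings_def by (rule finite_permutations) simp

lemma matchings_lessThan: "y \<in> matchings n \<Longrightarrow> i < n \<Longrightarrow> y i < n"
  unfolding matchings_def using permutes_in_image by fastforce

lemma SW_le_OPT: "y \<in> matchings n \<Longrightarrow> SW n v y \<le> OPT n v"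
  unfolding OPT_def using finite_matchings by (intro Max_ge) auto

lemma unit_sum_le_one:
  assumes "unit_sum n v" "i < n" "j < n"
  shows "v i j \<le> 1"
proof -
  have "v i j \<le> (\<Sum>k<n. v i k)"
    using assms unfolding unit_sum_def by (intro member_le_sum) auto
  then show ?thesis using assms unfolding unit_sum_def by simp
qed

lemma OPT_le_card:
  assumes "unit_sum n v"
  shows "OPT n v \<le> real n"
proof -
  have "SW n v y \<le> real n" if "y \<in> matchings n" for y
  proof -
    have "SW n v y \<le> (\<Sum>i<n. 1)"
      unfolding SW_def using assms that matchings_lessThan unit_sum_le_one
      by (intro sum_mono) blast
    then show ?thesis by simp
  qed
  moreover have "id \<in> matchings n" unfolding matchings_def by simp
  ultimately show ?thesis
    unfolding OPT_def using finite_matchings by (subst Max_le_iff) auto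
qed

lemma value_le_SW:
  assumes "unit_sum n v" "y \<in> matchings n" "i < n"
  shows "v i (y i) \<le> SW n v y"
  unfolding SW_def using assms matchings_lessThan
  by (intro member_le_sum) (auto simp: unit_sum_def)

lemma partial_matching_le_OPT:
  assumes "unit_sum n v" "P \<subseteq> {..<n}" "inj_on f P" "f ` P \<subseteq> {..<n}"
  shows "(\<Sum>j\<in>P. v j (f j)) \<le> OPT n v"
proof -
  obtain p where p: "p permutes {..<n}" "\<forall>j\<in>P. p j = f j"
    using permutes_extend_inj_on[OF _ assms(2-4)] by auto
  have "p \<in> matchings n" using p(1) unfolding matchings_def by simp
  have "(\<Sum>j\<in>P. v j (f j)) = (\<Sum>j\<in>P. v j (p j))" using p(2) by simp
  also have "\<dots> \<le> SW n v p"
    unfolding SW_def using assms(1,2) \<open>p \<in> matchings n\<close> matchings_lessThan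
    by (intro sum_mono2) (auto simp: unit_sum_def)
  also have "\<dots> \<le> OPT n v" using \<open>p \<in> matchings n\<close> by (rule SW_le_OPT)
  finally show ?thesis .
qed

lemma ratio_le_distortion:
  assumes "unit_sum n v" "consistent n v r"
  shows "ratio (OPT n v) (SW n v (A r)) \<le> distortion n A"
  unfolding distortion_def using assms by (intro SUP_upper2[where i = "(v, r)"]) auto

lemma top_item_value_ge:
  assumes "unit_sum n v" "consistent n v r" "i < n"
  shows "1 / real n \<le> v i (r i 0)"
proof -
  have rp: "r i permutes {..<n}"
    using assms(2,3) unfolding consistent_def ordinal_profile_def by auto
  have top: "v i k \<le> v i (r i 0)" if "k < n" for k
  proof -
    obtain l where l: "l < n" "r i l = k"
      using permutes_surj[OF rp] permutes_in_image[OF rp] \<open>k < n\<close> by (metis lessThan_iff surjD)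
    show ?thesis
      using assms(2,3) l unfolding consistent_def by (cases "l = 0") auto
  qed
  have "1 = (\<Sum>k<n. v i k)" using assms(1,3) unfolding unit_sum_def by auto
  also have "\<dots> \<le> (\<Sum>k<n. v i (r i 0))" using top by (intro sum_mono) auto
  finally show ?thesis using assms(3) by (simp add: field_simps)
qed

lemma distortion_le_of_top_item_matched:
  assumes "1 \<le> n" "ordinal_alg n A"
    and top: "\<forall>r. ordinal_profile n r \<longrightarrow> (\<exists>i<n. A r i = r i 0)"
  shows "distortion n A \<le> ereal (real n ^ 2)"
  unfolding distortion_def
proof (rule SUP_least, clarify)
  fix v r assume us: "unit_sum n v" and cons: "consistent n v r"
  have "ordinal_profile n r" using cons unfolding consistent_def by simp
  then have y: "A r \<in> matchings n" and "\<exists>i<n. A r i = r i 0"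
    using assms(2) top unfolding ordinal_alg_def by auto
  then obtain i where "i < n" "A r i = r i 0" by blast
  then have sw: "1 / real n \<le> SW n v (A r)"
    using top_item_value_ge[OF us cons] value_le_SW[OF us y] by (metis order_trans)
  have "0 < 1 / real n" using assms(1) by simp
  then have swpos: "0 < SW n v (A r)" using sw by linarith
  have "OPT n v / SW n v (A r) \<le> real n / SW n v (A r)"
    using OPT_le_card[OF us] swpos by (simp add: divide_right_mono)
  also have "\<dots> \<le> real n / (1 / real n)"
    using swpos \<open>0 < 1 / real n\<close> by (intro divide_left_mono[OF sw]) auto
  also have "\<dots> = real n ^ 2" by (simp add: power2_eq_square)
  finally show "ratio (OPT n (fst (v, r))) (SW n (fst (v, r)) (A (snd (v, r))))
      \<le> ereal (real n ^ 2)"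
    using swpos unfolding ratio_def by simp
qed

definition pair_item :: "nat \<Rightarrow> nat" where
  "pair_item j = j div 2 + 1"

definition hard_profile :: "nat \<Rightarrow> nat \<Rightarrow> nat \<Rightarrow> nat" where
  "hard_profile n i = (if i < n then transpose 1 (pair_item i) else id)"

definition adversarial_valuation :: "nat \<Rightarrow> (nat \<Rightarrow> nat) \<Rightarrow> nat \<Rightarrow> nat \<Rightarrow> real" where
  "adversarial_valuation n y j k =
     (if y j = 0 then 1 / real n
      else if y j = pair_item j then (if k = 0 then 1 else 0)
      else if k = 0 \<or> k = pair_item j then 1 / 2 else 0)"

lemma pair_item_neq_0 [simp]: "pair_item j \<noteq> 0"
  by (simp add: pair_item_def)

lemma pair_item_less: "2 \<le> n \<Longrightarrow> j < n \<Longrightarrow> pair_item j < n"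
  unfolding pair_item_def by linarith

lemma ordinal_profile_hard_profile:
  assumes "2 \<le> n"
  shows "ordinal_profile n (hard_profile n)"
  unfolding ordinal_profile_def hard_profile_def
  using assms pair_item_less by (auto intro!: permutes_swap_id)

lemma hard_profile_0: "i < n \<Longrightarrow> hard_profile n i 0 = 0"
  by (simp add: hard_profile_def)

lemma hard_profile_below_second:
  "i < n \<Longrightarrow> 2 \<le> l \<Longrightarrow> hard_profile n i l \<notin> {0, pair_item i}"
  by (auto simp: hard_profile_def transpose_def)

lemma unit_sum_adversarial_valuation:
  assumes "2 \<le> n"
  shows "unit_sum n (adversarial_valuation n y)"
  unfolding unit_sum_def
proof (intro allI impI conjI)
  fix j k assume "j < n"
  show "0 \<le> adversarial_valuation n y j k" by (simp add: adversarial_valuation_def)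
next
  fix j assume j: "j < n"
  have split: "(if k = 0 \<or> k = pair_item j then 1 / 2 else 0)
      = (if k = 0 then 1 / 2 else 0) + (if k = pair_item j then 1 / 2 else (0::real))" for k
    by auto
  show "(\<Sum>k<n. adversarial_valuation n y j k) = 1"
    using assms pair_item_less[OF assms j]
    by (cases "y j = 0"; cases "y j = pair_item j") (auto simp: adversarial_valuation_def split sum.distrib)
qed

lemma consistent_adversarial_valuation:
  assumes "2 \<le> n"
  shows "consistent n (adversarial_valuation n y) (hard_profile n)"
  unfolding consistent_def
proof (intro conjI allI impI ordinal_profile_hard_profile[OF assms])
  fix i k l assume "i < n" "k < l \<and> l < n"
  show "adversarial_valuation n y i (hard_profile n i l)
      \<le> adversarial_valuation n y i (hard_profile n i k)"
  proof (cases "k = 0")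
    case True
    then show ?thesis
      using hard_profile_0[OF \<open>i < n\<close>] by (auto simp: adversarial_valuation_def)
  next
    case False
    then have "hard_profile n i l \<notin> {0, pair_item i}"
      using \<open>k < l \<and> l < n\<close> \<open>i < n\<close> by (intro hard_profile_below_second) auto
    then show ?thesis by (auto simp: adversarial_valuation_def)
  qed
qed

lemma SW_adversarial_valuation:
  assumes "y \<in> matchings n" "1 \<le> n"
  shows "SW n (adversarial_valuation n y) y = 1 / real n"
proof -
  have "SW n (adversarial_valuation n y) y = (\<Sum>j<n. if y j = 0 then 1 / real n else 0)"
    unfolding SW_def by (intro sum.cong) (auto simp: adversarial_valuation_def)
  also have "\<dots> = 1 / real n"
    using assms unfolding matchings_def by (intro sum_if_permutes_eq) auto
  finally show ?thesis .
qed

text \<open>From the pair {2i, 2i+1}, which shares the second item i+1, pick an agent that did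
  not receive it; she values it at 1/2 unless she holds item 0, which at most one agent does.\<close>
lemma OPT_adversarial_valuation_ge:
  assumes y: "y \<in> matchings n" and "2 \<le> n"
  shows "(real (n div 2) - 1) / 2 \<le> OPT n (adversarial_valuation n y)"
proof -
  let ?v = "adversarial_valuation n y" and ?m = "n div 2"
  define c where "c i = (if y (2 * i) = pair_item (2 * i) then 2 * i + 1 else 2 * i)" for i
  define P where "P = c ` {..<?m}"
  have c_div: "c i div 2 = i" for i unfolding c_def by auto
  have c_inj: "inj_on c {..<?m}" by (rule inj_on_inverseI[where g = "\<lambda>j. j div 2"]) (simp add: c_div)
  have P_sub: "P \<subseteq> {..<n}" unfolding P_def c_def by auto
  have yp: "y permutes {..<n}" using y unfolding matchings_def by simp
  have missed: "y (c i) \<noteq> pair_item (c i)" for i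
  proof -
    have "y (2 * i) \<noteq> y (2 * i + 1)" using permutes_inj[OF yp] by (simp add: inj_eq)
    then show ?thesis unfolding c_def pair_item_def by auto
  qed
  have "(\<Sum>j\<in>P. if y j = 0 then 1 else 0) \<le> (\<Sum>j<n. if y j = 0 then 1 else (0::real))"
    using P_sub by (intro sum_mono2) auto
  also have "\<dots> = 1" using assms by (intro sum_if_permutes_eq[OF yp]) auto
  finally have holders: "(\<Sum>j\<in>P. if y j = 0 then 1 else (0::real)) \<le> 1" .
  have "(real ?m - 1) / 2 \<le> (\<Sum>j\<in>P. (1 - (if y j = 0 then 1 else 0)) / 2)"
    using holders c_inj card_image[OF c_inj]
    by (simp add: P_def sum_subtractf sum_divide_distrib[symmetric] divide_right_mono)
  also have "\<dots> \<le> (\<Sum>j\<in>P. ?v j (pair_item j))"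
    using missed unfolding P_def by (intro sum_mono) (auto simp: adversarial_valuation_def)
  also have "\<dots> \<le> OPT n ?v"
  proof (rule partial_matching_le_OPT[OF unit_sum_adversarial_valuation[OF assms(2)] P_sub])
    show "inj_on pair_item P"
      unfolding P_def inj_on_def pair_item_def using c_div by auto
    show "pair_item ` P \<subseteq> {..<n}" using P_sub pair_item_less[OF assms(2)] by auto
  qed
  finally show ?thesis .
qed

lemma distortion_ge_quadratic:
  assumes "6 \<le> n" "ordinal_alg n A"
  shows "ereal (1 / 8 * real n ^ 2) \<le> distortion n A"
proof -
  let ?r = "hard_profile n" and ?v = "adversarial_valuation n (A (hard_profile n))"
  have y: "A ?r \<in> matchings n"
    using assms ordinal_profile_hard_profile unfolding ordinal_alg_def by simp
  have n: "0 < real n" "real n - 1 \<le> 2 * real (n div 2)" using assms(1) by linarith+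
  have "1 / 8 * real n ^ 2 \<le> (real (n div 2) - 1) / 2 * real n"
    using n assms(1) by (simp add: power2_eq_square mult_right_mono)
  also have "\<dots> \<le> OPT n ?v * real n"
    using OPT_adversarial_valuation_ge[OF y] assms(1) n by (simp add: mult_right_mono)
  also have "\<dots> = OPT n ?v / SW n ?v (A ?r)"
    using SW_adversarial_valuation[OF y] assms(1) by simp
  finally have "ereal (1 / 8 * real n ^ 2) \<le> ratio (OPT n ?v) (SW n ?v (A ?r))"
    using SW_adversarial_valuation[OF y] assms(1) unfolding ratio_def by simp
  also have "\<dots> \<le> distortion n A"
    using assms(1) by (intro ratio_le_distortion unit_sum_adversarial_valuation
        consistent_adversarial_valuation) auto
  finally show ?thesis .
qed

theorem theorem1:
  shows "(\<forall>n A. n \<ge> 1 \<and> ordinal_alg n A \<and>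
            (\<forall>r. ordinal_profile n r \<longrightarrow> (\<exists>i<n. A r i = r i 0))
          \<longrightarrow> distortion n A \<le> ereal (real n ^ 2))
       \<and> (\<exists>c>0. \<exists>N. \<forall>n\<ge>N. \<forall>A. ordinal_alg n A
          \<longrightarrow> distortion n A \<ge> ereal (c * real n ^ 2))"
  using distortion_le_of_top_item_matched distortion_ge_quadratic
  by (metis zero_less_divide_1_iff zero_less_numeral)

end
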